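(* Let $F/{\mathbf Q}$ be a totally real Galois extension of degree $2^d$. Suppose there is $\alpha\in F$ with $\operatorname{N}_{F/{\mathbf Q}}(\alpha)<0$ such that the ideal $(\alpha)$ is fixed by $\operatorname{Gal}(F/{\mathbf Q})$. Then for every assignment of signs $\pm1$ to the $2^d$ real embeddings of $F$ whose product is $1$, there is a unit of $\mathcal O_F$ whose signs under the real embeddings are exactly the given ones. *)

theory Defs
  imports "HOL-Analysis.Analysis" "HOL-Computational_Algebra.Polynomial"
begin

text \<open>Number fields are modelled as subfields of the complex numbers.\<close>

definition subfield_C :: "complex set \<Rightarrow> bool" where
  "subfield_C F \<longleftrightarrow> 0 \<in> F \<and> 1 \<in> F \<and>
     (\<forall>x\<in>F. \<forall>y\<in>F. x + y \<in> F \<and> x * y \<in> F) \<and>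
     (\<forall>x\<in>F. - x \<in> F \<and> inverse x \<in> F)"

definition degree_Q :: "complex set \<Rightarrow> nat" where
  "degree_Q F = vector_space.dim (\<lambda>q x. of_rat q * x) F"

text \<open>Field embeddings F -> C, normalised to 0 outside F so that there are
  finitely many of them.\<close>

definition embeddings :: "complex set \<Rightarrow> (complex \<Rightarrow> complex) set" where
  "embeddings F = {\<sigma>. (\<forall>x\<in>F. \<forall>y\<in>F. \<sigma> (x + y) = \<sigma> x + \<sigma> y \<and> \<sigma> (x * y) = \<sigma> x * \<sigma> y)
                      \<and> \<sigma> 1 = 1 \<and> (\<forall>x. x \<notin> F \<longrightarrow> \<sigma> x = 0)}"

definition totally_real :: "complex set \<Rightarrow> bool" where
  "totally_real F \<longleftrightarrow> (\<forall>\<sigma>\<in>embeddings F. \<sigma> ` F \<subseteq> \<real>)"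

text \<open>F/Q Galois (normal): every embedding maps F onto F; the Galois group is
  then the set of embeddings (viewed as automorphisms of F).\<close>

definition galois_Q :: "complex set \<Rightarrow> bool" where
  "galois_Q F \<longleftrightarrow> (\<forall>\<sigma>\<in>embeddings F. \<sigma> ` F = F)"

definition field_norm :: "complex set \<Rightarrow> complex \<Rightarrow> complex" where
  "field_norm F a = (\<Prod>\<sigma>\<in>embeddings F. \<sigma> a)"

definition ring_of_integers :: "complex set \<Rightarrow> complex set" where
  "ring_of_integers F = {x\<in>F. algebraic_int x}"

definition units_of_integers :: "complex set \<Rightarrow> complex set" where
  "units_of_integers F = {u\<in>ring_of_integers F. \<exists>v\<in>ring_of_integers F. u * v = 1}"

definition principal_ideal :: "complex set \<Rightarrow> complex \<Rightarrow> complex set" where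
  "principal_ideal F a = {a * x | x. x \<in> ring_of_integers F}"

end

theory Submission
  imports Defs "HOL-Algebra.Sylow" "HOL-Algebra.Group_Action" "HOL-Algebra.Multiplicative_Group"
    "Jordan_Normal_Form.Char_Poly"
begin

text \<open>Let \<open>w \<sigma>\<close> be the sign of \<open>\<sigma> \<alpha>\<close>. Since \<open>(\<alpha>)\<close> is Galois-stable, every \<open>\<sigma> \<alpha> / \<alpha>\<close> is a unit,
  and for a set \<open>X\<close> of even size the unit \<open>u\<^sub>X = \<Prod>\<sigma>\<in>X. \<sigma> \<alpha> / \<alpha>\<close> has sign
  \<open>\<Prod>\<sigma>\<in>X. w (\<tau> \<sigma>)\<close> under \<open>\<tau>\<close>. The map sending \<open>X\<close> to this sign vector is a homomorphism from
  the subsets of the Galois group \<open>G\<close> under symmetric difference to \<open>{\<plusminus>1}\<^sup>G\<close>. Its kernel is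
  stable under translation by \<open>G\<close>, which is a \<open>2\<close>-group because an element of prime order \<open>p\<close>
  with fixed field \<open>K\<close> gives \<open>[F : \<rat>] = p [K : \<rat>]\<close>. Hence a nontrivial kernel, having even
  size, would contain a second translation-invariant set besides \<open>{}\<close>, namely \<open>G\<close> itself; but
  the sign vector of \<open>G\<close> is the sign of the norm of \<open>\<alpha>\<close>, which is \<open>-1\<close>. So the map is injective,
  hence onto by counting, and comparing products shows that a preimage of a sign vector with
  product \<open>1\<close> has even size.\<close>

section \<open>Products of algebraic integers\<close>

lemma sum_div_mod_reindex:
  fixes f :: "nat \<Rightarrow> nat \<Rightarrow> 'a::comm_monoid_add"
  assumes "m > 0"
  shows "(\<Sum>l<n*m. f (l div m) (l mod m)) = (\<Sum>a<n. \<Sum>b<m. f a b)"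
proof -
  have "bij_betw (\<lambda>(a,b). a*m+b) ({..<n} \<times> {..<m}) {..<n*m}"
  proof (rule bij_betwI[where g = "\<lambda>l. (l div m, l mod m)"])
    show "(\<lambda>(a, b). a * m + b) \<in> {..<n} \<times> {..<m} \<rightarrow> {..<n * m}"
    proof (clarsimp)
      fix a b assume "a < n" "b < m"
      then have "a * m + b < Suc a * m" by simp
      also have "\<dots> \<le> n * m" using \<open>a < n\<close> by (intro mult_right_mono) auto
      finally show "a * m + b < n * m" .
    qed
  qed (use assms in \<open>auto simp: less_mult_imp_div_less\<close>)
  then have "(\<Sum>l<n*m. f (l div m) (l mod m)) = (\<Sum>(a,b)\<in>{..<n} \<times> {..<m}. f a b)"
    by (subst sum.reindex_bij_betw[symmetric]) (use assms in \<open>auto intro!: sum.cong\<close>)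
  then show ?thesis
    by (simp add: sum.cartesian_product)
qed

text \<open>Row \<open>i\<close> of the (transposed) companion matrix of \<open>p\<close>: multiplication by a root \<open>x\<close>
  sends \<open>x ^ i\<close> to \<open>x ^ (i + 1)\<close>, which is reduced modulo \<open>p\<close> when \<open>i + 1 = degree p\<close>.\<close>

definition companion_entry :: "int poly \<Rightarrow> nat \<Rightarrow> nat \<Rightarrow> int" where
  "companion_entry p i a =
     (if Suc i < degree p then (if a = Suc i then 1 else 0) else - poly.coeff p a)"

lemma root_mult_power_companion:
  fixes p :: "int poly" and x :: "'a :: field_char_0"
  assumes monic: "lead_coeff p = 1" and root: "poly (map_poly of_int p) x = 0"
    and i: "i < degree p"
  shows "x * x ^ i = (\<Sum>a<degree p. of_int (companion_entry p i a) * x ^ a)"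
proof (cases "Suc i < degree p")
  case True
  then have "(\<Sum>a<degree p. of_int (companion_entry p i a) * x ^ a)
      = (\<Sum>a<degree p. if a = Suc i then x ^ a else 0)"
    by (intro sum.cong) (auto simp: companion_entry_def)
  then show ?thesis
    using True by (simp add: sum.delta)
next
  case False
  then have n: "degree p = Suc i" using i by simp
  have "0 = (\<Sum>a\<le>degree p. of_int (poly.coeff p a) * x ^ a)"
    using root by (simp add: poly_altdef degree_map_poly coeff_map_poly)
  also have "\<dots> = (\<Sum>a<degree p. of_int (poly.coeff p a) * x ^ a) + x ^ degree p"
    using monic by (simp add: lessThan_Suc_atMost[symmetric] n)
  finally have "x ^ degree p = - (\<Sum>a<degree p. of_int (poly.coeff p a) * x ^ a)"
    by (simp add: eq_neg_iff_add_eq_0 add.commute)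
  then show ?thesis
    using False by (simp add: companion_entry_def n sum_negf)
qed

lemma degree_pos_if_monic_root:
  assumes "lead_coeff p = 1" and "poly (map_poly (of_int :: int \<Rightarrow> 'a :: field_char_0) p) x = 0"
  shows "degree p > 0"
proof (rule ccontr)
  assume "\<not> degree p > 0"
  then have "p = 1" using assms(1) by (metis degree_0_id gr0I one_poly_eq_simps(1))
  then show False using assms(2) by simp
qed

lemma algebraic_int_eigenvalue_int_mat:
  fixes A :: "int mat" and v :: "'a :: field_char_0 vec"
  assumes A: "A \<in> carrier_mat N N" and v: "v \<in> carrier_vec N" "v \<noteq> 0\<^sub>v N"
    and eigen: "map_mat of_int A *\<^sub>v v = c \<cdot>\<^sub>v v"
  shows "algebraic_int c"
proof -
  have B: "map_mat of_int A \<in> carrier_mat N N"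
    using A by simp
  have "eigenvalue (map_mat of_int A) c"
    using v eigen unfolding eigenvalue_def eigenvector_def using B by auto
  then have "poly (char_poly (map_mat of_int A)) c = 0"
    using eigenvalue_root_char_poly[OF B] by blast
  moreover have "char_poly (map_mat of_int A) = map_poly of_int (char_poly A)"
    by (rule of_int_hom.char_poly_hom[OF A])
  moreover have "lead_coeff (char_poly A) = 1"
    using degree_monic_char_poly[OF A] by simp
  ultimately show ?thesis
    by (metis algebraic_int_altdef_ipoly)
qed

text \<open>\<open>x * y\<close> is an eigenvalue of the Kronecker product of the companion matrices of
  \<open>x\<close> and \<open>y\<close>, with eigenvector \<open>(x ^ a * y ^ b)\<^sub>a\<^sub>,\<^sub>b\<close>.\<close>

lemma algebraic_int_mult:
  fixes x y :: "'a :: field_char_0"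
  assumes "algebraic_int x" "algebraic_int y"
  shows "algebraic_int (x * y)"
proof -
  obtain p :: "int poly" where p: "poly (map_poly of_int p) x = 0" "lead_coeff p = 1"
    using assms(1) algebraic_int_altdef_ipoly by blast
  obtain q :: "int poly" where q: "poly (map_poly of_int q) y = 0" "lead_coeff q = 1"
    using assms(2) algebraic_int_altdef_ipoly by blast
  define n m where "n = degree p" and "m = degree q"
  have m0: "m > 0" using degree_pos_if_monic_root[OF q(2,1)] by (simp add: m_def)
  have n0: "n > 0" using degree_pos_if_monic_root[OF p(2,1)] by (simp add: n_def)
  define N where "N = n * m"
  define A :: "int mat" where "A = mat N N (\<lambda>(k,l).
    companion_entry p (k div m) (l div m) * companion_entry q (k mod m) (l mod m))"
  define w :: "'a vec" where "w = vec N (\<lambda>k. x ^ (k div m) * y ^ (k mod m))"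
  have "map_mat of_int A *\<^sub>v w = (x * y) \<cdot>\<^sub>v w"
  proof (rule eq_vecI)
    fix k assume "k < dim_vec ((x * y) \<cdot>\<^sub>v w)"
    then have kN: "k < N" by (simp add: w_def)
    have kn: "k div m < n" using kN by (simp add: N_def less_mult_imp_div_less)
    have km: "k mod m < m" using m0 by simp
    have "(map_mat of_int A *\<^sub>v w) $ k = (\<Sum>l<N. of_int (companion_entry p (k div m) (l div m)
        * companion_entry q (k mod m) (l mod m)) * (x ^ (l div m) * y ^ (l mod m)))"
      using kN by (simp add: A_def w_def mult_mat_vec_def scalar_prod_def lessThan_atLeast0)
    also have "\<dots> = (\<Sum>a<n. \<Sum>b<m. of_int (companion_entry p (k div m) a
        * companion_entry q (k mod m) b) * (x ^ a * y ^ b))"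
      unfolding N_def by (rule sum_div_mod_reindex[OF m0])
    also have "\<dots> = (\<Sum>a<n. of_int (companion_entry p (k div m) a) * x ^ a)
        * (\<Sum>b<m. of_int (companion_entry q (k mod m) b) * y ^ b)"
      by (simp add: sum_product mult_ac)
    also have "\<dots> = (x * x ^ (k div m)) * (y * y ^ (k mod m))"
      using root_mult_power_companion[OF p(2,1)] root_mult_power_companion[OF q(2,1)] kn km
      by (simp add: n_def m_def)
    also have "\<dots> = ((x * y) \<cdot>\<^sub>v w) $ k" using kN by (simp add: w_def mult_ac)
    finally show "(map_mat of_int A *\<^sub>v w) $ k = ((x * y) \<cdot>\<^sub>v w) $ k" .
  qed (simp add: A_def w_def)
  moreover have "w $ 0 = 1"
    using n0 m0 by (simp add: w_def N_def)
  then have "w \<noteq> 0\<^sub>v N"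
    using n0 m0 by (auto simp: N_def)
  ultimately show ?thesis
    by (intro algebraic_int_eigenvalue_int_mat[of A N w]) (simp_all add: A_def w_def)
qed

section \<open>Subfields of \<open>\<complex>\<close> and their embeddings\<close>

interpretation Qvs: vector_space "\<lambda>(q::rat) (x::complex). of_rat q * x"
  by unfold_locales (simp_all add: distrib_left distrib_right of_rat_add of_rat_mult)

lemma poly_altdef_le:
  fixes p :: "'a :: comm_semiring_1 poly"
  assumes "degree p \<le> n"
  shows "poly p x = (\<Sum>i\<le>n. poly.coeff p i * x ^ i)"
proof -
  have "poly p x = poly (\<Sum>i\<le>n. Polynomial.monom (poly.coeff p i) i) x"
    using poly_as_sum_of_monoms'[OF assms] by simp
  then show ?thesis
    by (simp add: poly_sum Polynomial.poly_monom)
qed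

lemma embeddingsI:
  assumes "\<And>x y. x \<in> F \<Longrightarrow> y \<in> F \<Longrightarrow> \<sigma> (x + y) = \<sigma> x + \<sigma> y"
    and "\<And>x y. x \<in> F \<Longrightarrow> y \<in> F \<Longrightarrow> \<sigma> (x * y) = \<sigma> x * \<sigma> y"
    and "\<sigma> 1 = 1" and "\<And>x. x \<notin> F \<Longrightarrow> \<sigma> x = 0"
  shows "\<sigma> \<in> embeddings F"
  using assms by (simp add: embeddings_def)

locale complex_subfield =
  fixes F :: "complex set"
  assumes subfield: "subfield_C F"
begin

lemma zero_mem [simp]: "0 \<in> F" and one_mem [simp]: "1 \<in> F"
  using subfield by (auto simp: subfield_C_def)

lemma add_mem [simp, intro]: "x \<in> F \<Longrightarrow> y \<in> F \<Longrightarrow> x + y \<in> F"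
  and mult_mem [simp, intro]: "x \<in> F \<Longrightarrow> y \<in> F \<Longrightarrow> x * y \<in> F"
  and uminus_mem [simp, intro]: "x \<in> F \<Longrightarrow> - x \<in> F"
  and inverse_mem [simp, intro]: "x \<in> F \<Longrightarrow> inverse x \<in> F"
  using subfield by (auto simp: subfield_C_def)

lemma diff_mem [simp, intro]: "x \<in> F \<Longrightarrow> y \<in> F \<Longrightarrow> x - y \<in> F"
  by (metis add_mem uminus_mem diff_conv_add_uminus)

lemma divide_mem [simp, intro]: "x \<in> F \<Longrightarrow> y \<in> F \<Longrightarrow> x / y \<in> F"
  by (metis mult_mem inverse_mem divide_inverse)

lemma sum_mem [intro]: "(\<And>i. i \<in> A \<Longrightarrow> f i \<in> F) \<Longrightarrow> sum f A \<in> F"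
  by (induction A rule: infinite_finite_induct) auto

lemma prod_mem [intro]: "(\<And>i. i \<in> A \<Longrightarrow> f i \<in> F) \<Longrightarrow> prod f A \<in> F"
  by (induction A rule: infinite_finite_induct) auto

lemma power_mem [simp, intro]: "x \<in> F \<Longrightarrow> x ^ n \<in> F"
  by (induction n) auto

lemma of_nat_mem [simp]: "of_nat n \<in> F"
  by (induction n) auto

lemma of_int_mem [simp]: "of_int n \<in> F"
  by (cases n rule: int_cases) (auto simp del: of_nat_Suc)

lemma of_rat_mem [simp]: "of_rat q \<in> F"
  by (cases q) (auto simp: of_rat_rat)

lemma Ints_subset: "\<int> \<subseteq> F"
  by (auto elim: Ints_cases)

definition id_F :: "complex \<Rightarrow> complex" where
  "id_F x = (if x \<in> F then x else 0)"

lemma id_F_embedding [simp]: "id_F \<in> embeddings F"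
  by (rule embeddingsI) (auto simp: id_F_def)

definition poly_over :: "complex poly \<Rightarrow> bool" where
  "poly_over P \<longleftrightarrow> (\<forall>i. poly.coeff P i \<in> F)"

lemma poly_over_add: "poly_over P \<Longrightarrow> poly_over Q \<Longrightarrow> poly_over (P + Q)"
  and poly_over_smult: "c \<in> F \<Longrightarrow> poly_over P \<Longrightarrow> poly_over (Polynomial.smult c P)"
  and poly_over_pCons: "a \<in> F \<Longrightarrow> poly_over P \<Longrightarrow> poly_over (pCons a P)"
  and poly_over_const: "a \<in> F \<Longrightarrow> poly_over [:a:]"
  unfolding poly_over_def by (auto simp: coeff_pCons split: nat.splits)

lemma poly_over_mult: "poly_over P \<Longrightarrow> poly_over Q \<Longrightarrow> poly_over (P * Q)"
  unfolding poly_over_def coeff_mult by auto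

lemma poly_over_prod: "(\<And>i. i \<in> A \<Longrightarrow> poly_over (f i)) \<Longrightarrow> poly_over (prod f A)"
  by (induction A rule: infinite_finite_induct)
    (auto simp: poly_over_mult poly_over_const simp flip: pCons_one)

lemma poly_mem: "poly_over P \<Longrightarrow> x \<in> F \<Longrightarrow> poly P x \<in> F"
  unfolding poly_altdef poly_over_def by auto

lemma poly_interpolation:
  assumes "\<And>j. j \<le> n \<Longrightarrow> t j \<in> F \<and> y j \<in> F" and "inj_on t {..n}"
  shows "\<exists>P. poly_over P \<and> degree P \<le> n \<and> (\<forall>j\<le>n. poly P (t j) = y j)"
  using assms
proof (induction n)
  case 0
  then show ?case by (intro exI[of _ "[:y 0:]"]) (auto simp: poly_over_const)
next
  case (Suc n)
  have "inj_on t {..n}" using Suc.prems(2) by (rule inj_on_subset) auto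
  then obtain P where P: "poly_over P" "degree P \<le> n" "\<forall>j\<le>n. poly P (t j) = y j"
    using Suc by auto
  have tF: "t j \<in> F" and yF: "y j \<in> F" if "j \<le> Suc n" for j
    using Suc.prems(1) that by auto
  define W where "W = (\<Prod>j\<le>n. [:- t j, 1:])"
  have W: "poly_over W"
    unfolding W_def using tF by (intro poly_over_prod poly_over_pCons poly_over_const) auto
  have "degree W \<le> Suc n"
    unfolding W_def using degree_prod_sum_le[of "{..n}" "\<lambda>j. [:- t j, 1:]"] by simp
  have poly_W: "poly W x = (\<Prod>j\<le>n. x - t j)" for x
    unfolding W_def poly_prod by simp
  have "poly W (t (Suc n)) \<noteq> 0"
    using Suc.prems(2) unfolding poly_W by (auto dest: inj_onD)
  define c where "c = (y (Suc n) - poly P (t (Suc n))) / poly W (t (Suc n))"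
  have "c \<in> F"
    unfolding c_def using yF tF poly_mem[OF P(1)] poly_mem[OF W] by blast
  show ?case
  proof (intro exI conjI allI impI)
    show "poly_over (P + Polynomial.smult c W)"
      by (intro poly_over_add poly_over_smult P(1) W \<open>c \<in> F\<close>)
    show "degree (P + Polynomial.smult c W) \<le> Suc n"
      using P(2) \<open>degree W \<le> Suc n\<close> degree_smult_le[of c W] by (intro degree_add_le) auto
    fix j assume "j \<le> Suc n"
    then consider "j = Suc n" | "j \<le> n" by linarith
    then show "poly (P + Polynomial.smult c W) (t j) = y j"
    proof cases
      case 1
      then show ?thesis using \<open>poly W (t (Suc n)) \<noteq> 0\<close> by (simp add: c_def)
    next
      case 2
      then have "poly W (t j) = 0"
        unfolding poly_W by (intro prod_zero) auto
      then show ?thesis using P(3) 2 by simp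
    qed
  qed
qed

text \<open>The following facts are not declared \<open>simp\<close>: once exported, their left-hand sides such as
  \<open>?\<sigma> (x + y)\<close> have a variable head and would match every application.\<close>

context
  fixes \<sigma> assumes \<sigma>: "\<sigma> \<in> embeddings F"
begin

lemma emb_add: "x \<in> F \<Longrightarrow> y \<in> F \<Longrightarrow> \<sigma> (x + y) = \<sigma> x + \<sigma> y"
  and emb_mult: "x \<in> F \<Longrightarrow> y \<in> F \<Longrightarrow> \<sigma> (x * y) = \<sigma> x * \<sigma> y"
  and emb_1: "\<sigma> 1 = 1"
  and emb_outside: "x \<notin> F \<Longrightarrow> \<sigma> x = 0"
  using \<sigma> by (auto simp: embeddings_def)

lemma emb_0: "\<sigma> 0 = 0"
  using emb_add[of 0 0] by simp

lemma emb_uminus: "x \<in> F \<Longrightarrow> \<sigma> (- x) = - \<sigma> x"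
  using emb_add[of x "- x"] by (simp add: emb_0 eq_neg_iff_add_eq_0 add.commute)

lemma emb_diff: "x \<in> F \<Longrightarrow> y \<in> F \<Longrightarrow> \<sigma> (x - y) = \<sigma> x - \<sigma> y"
  using emb_add[of x "- y"] by (simp add: emb_uminus)

lemma emb_inverse: "x \<in> F \<Longrightarrow> \<sigma> (inverse x) = inverse (\<sigma> x)"
  using emb_mult[of x "inverse x"] by (cases "x = 0") (auto simp: emb_0 emb_1 inverse_unique)

lemma emb_nonzero: "x \<in> F \<Longrightarrow> x \<noteq> 0 \<Longrightarrow> \<sigma> x \<noteq> 0"
  using emb_mult[of x "inverse x"] by (auto simp: emb_1)

lemma emb_divide: "x \<in> F \<Longrightarrow> y \<in> F \<Longrightarrow> \<sigma> (x / y) = \<sigma> x / \<sigma> y"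
  using emb_mult[of x "inverse y"] by (simp add: divide_inverse emb_inverse)

lemma emb_sum: "(\<And>i. i \<in> A \<Longrightarrow> f i \<in> F) \<Longrightarrow> \<sigma> (sum f A) = (\<Sum>i\<in>A. \<sigma> (f i))"
  by (induction A rule: infinite_finite_induct) (auto simp: emb_0 emb_add sum_mem)

lemma emb_prod: "(\<And>i. i \<in> A \<Longrightarrow> f i \<in> F) \<Longrightarrow> \<sigma> (prod f A) = (\<Prod>i\<in>A. \<sigma> (f i))"
  by (induction A rule: infinite_finite_induct) (auto simp: emb_1 emb_mult prod_mem)

lemma emb_power: "x \<in> F \<Longrightarrow> \<sigma> (x ^ n) = \<sigma> x ^ n"
  by (induction n) (auto simp: emb_1 emb_mult)

lemma emb_of_nat: "\<sigma> (of_nat n) = of_nat n"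
  by (induction n) (auto simp: emb_0 emb_1 emb_add)

lemma emb_of_int: "\<sigma> (of_int n) = of_int n"
  by (cases n rule: int_cases) (auto simp: emb_of_nat emb_uminus simp del: of_nat_Suc)

lemma emb_of_rat: "\<sigma> (of_rat q) = of_rat q"
  by (cases q) (auto simp: of_rat_rat emb_divide emb_of_int)

lemmas emb_simps = emb_0 emb_1 emb_add emb_mult emb_uminus emb_diff emb_inverse emb_divide
  emb_sum emb_prod emb_power emb_of_nat emb_of_int emb_of_rat

lemma inj_on_emb: "inj_on \<sigma> F"
  by (rule inj_onI) (metis diff_mem emb_diff emb_nonzero eq_iff_diff_eq_0)

lemma emb_poly:
  assumes "poly_over P" and "x \<in> F"
  shows "\<sigma> (poly P x) = poly (map_poly \<sigma> P) (\<sigma> x)"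
proof -
  have "\<sigma> (poly P x) = (\<Sum>i\<le>degree P. \<sigma> (poly.coeff P i) * \<sigma> x ^ i)"
    using assms unfolding poly_altdef poly_over_def by (simp add: emb_simps)
  also have "\<dots> = poly (map_poly \<sigma> P) (\<sigma> x)"
    by (simp add: poly_altdef_le[OF map_poly_degree_leq] coeff_map_poly emb_0)
  finally show ?thesis .
qed

lemma emb_algebraic_int:
  assumes "x \<in> F" and "algebraic_int x"
  shows "algebraic_int (\<sigma> x)"
proof -
  obtain p where p: "lead_coeff p = 1" "\<forall>i. poly.coeff p i \<in> \<int>" "poly p x = 0"
    using assms(2) by (cases rule: algebraic_int.cases) blast
  have fix_Ints: "\<sigma> c = c" if "c \<in> \<int>" for c
    using that by (auto elim: Ints_cases simp: emb_of_int)
  have "map_poly \<sigma> p = p"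
    using p(2) by (intro poly_eqI) (simp add: coeff_map_poly fix_Ints emb_0)
  moreover have "poly_over p"
    using p(2) Ints_subset by (auto simp: poly_over_def)
  ultimately have "poly p (\<sigma> x) = 0"
    using emb_poly[OF _ assms(1)] p(3) by (metis emb_0)
  then show ?thesis
    by (intro algebraic_int.intros[OF p(1,2)])
qed

end

end

section \<open>The Galois group\<close>

locale galois_subfield = complex_subfield +
  assumes galois: "galois_Q F"
begin

definition Gal :: "(complex \<Rightarrow> complex) monoid" where
  "Gal = \<lparr>carrier = embeddings F, mult = (\<circ>), one = id_F\<rparr>"

lemma Gal_simps [simp]:
  "carrier Gal = embeddings F" "x \<otimes>\<^bsub>Gal\<^esub> y = x \<circ> y" "\<one>\<^bsub>Gal\<^esub> = id_F"
  by (simp_all add: Gal_def)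

lemma emb_image: "\<sigma> \<in> embeddings F \<Longrightarrow> \<sigma> ` F = F"
  using galois by (simp add: galois_Q_def)

lemma emb_mem: "\<sigma> \<in> embeddings F \<Longrightarrow> x \<in> F \<Longrightarrow> \<sigma> x \<in> F"
  using emb_image by blast

lemma emb_eqI:
  assumes "\<sigma> \<in> embeddings F" "\<tau> \<in> embeddings F" "\<And>x. x \<in> F \<Longrightarrow> \<sigma> x = \<tau> x"
  shows "\<sigma> = \<tau>"
  using assms emb_outside by (metis ext)

lemma comp_embedding [intro]:
  assumes "\<sigma> \<in> embeddings F" "\<tau> \<in> embeddings F"
  shows "\<sigma> \<circ> \<tau> \<in> embeddings F"
  using emb_mem[OF assms(2)] emb_outside[OF assms(2)]
  by (intro embeddingsI) (auto simp: emb_simps[OF assms(1)] emb_simps[OF assms(2)])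

lemma id_F_comp [simp]:
  assumes "\<sigma> \<in> embeddings F" shows "id_F \<circ> \<sigma> = \<sigma>"
proof
  fix x
  show "(id_F \<circ> \<sigma>) x = \<sigma> x"
    using emb_mem[OF assms] emb_outside[OF assms] by (cases "x \<in> F") (auto simp: id_F_def)
qed

definition inv_emb :: "(complex \<Rightarrow> complex) \<Rightarrow> complex \<Rightarrow> complex" where
  "inv_emb \<sigma> y = (if y \<in> F then inv_into F \<sigma> y else 0)"

lemma inv_emb_apply:
  assumes "\<sigma> \<in> embeddings F" and "z \<in> F"
  shows "inv_emb \<sigma> (\<sigma> z) = z"
  using inj_on_emb[OF assms(1)] emb_mem[OF assms] assms(2) by (simp add: inv_emb_def inv_into_f_f)

lemma inv_emb_embedding:
  assumes \<sigma>: "\<sigma> \<in> embeddings F"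
  shows "inv_emb \<sigma> \<in> embeddings F"
proof (rule embeddingsI)
  fix x y assume "x \<in> F" "y \<in> F"
  then have "x \<in> \<sigma> ` F" "y \<in> \<sigma> ` F"
    by (simp_all add: emb_image[OF \<sigma>])
  then obtain x' y' where xy: "x' \<in> F" "y' \<in> F" "x = \<sigma> x'" "y = \<sigma> y'"
    by blast
  have "inv_emb \<sigma> (\<sigma> (x' + y')) = x' + y'" "inv_emb \<sigma> (\<sigma> (x' * y')) = x' * y'"
    using xy by (simp_all add: inv_emb_apply[OF \<sigma>])
  then show "inv_emb \<sigma> (x + y) = inv_emb \<sigma> x + inv_emb \<sigma> y"
    and "inv_emb \<sigma> (x * y) = inv_emb \<sigma> x * inv_emb \<sigma> y"
    using xy by (simp_all add: inv_emb_apply[OF \<sigma>] emb_simps[OF \<sigma>])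
next
  show "inv_emb \<sigma> 1 = 1"
    using inv_emb_apply[OF \<sigma> one_mem] by (simp add: emb_1[OF \<sigma>])
qed (simp add: inv_emb_def)

lemma inv_emb_comp:
  assumes \<sigma>: "\<sigma> \<in> embeddings F"
  shows "inv_emb \<sigma> \<circ> \<sigma> = id_F"
proof
  fix x
  show "(inv_emb \<sigma> \<circ> \<sigma>) x = id_F x"
  proof (cases "x \<in> F")
    case True
    then show ?thesis using inv_emb_apply[OF \<sigma> True] by (simp add: id_F_def)
  next
    case False
    then show ?thesis using inv_emb_apply[OF \<sigma> zero_mem] by (simp add: id_F_def emb_outside[OF \<sigma>] emb_0[OF \<sigma>])
  qed
qed

lemma group_Gal: "group Gal"
proof (rule groupI)
  show "\<exists>\<rho>\<in>carrier Gal. \<rho> \<otimes>\<^bsub>Gal\<^esub> \<sigma> = \<one>\<^bsub>Gal\<^esub>" if "\<sigma> \<in> carrier Gal" for \<sigma>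
    using that inv_emb_embedding inv_emb_comp by auto
qed (auto simp: comp_assoc)

sublocale Gal: group Gal
  by (rule group_Gal)

lemma pow_embedding [simp]: "\<sigma> \<in> embeddings F \<Longrightarrow> \<sigma> [^]\<^bsub>Gal\<^esub> (n::nat) \<in> embeddings F"
  using Gal.nat_pow_closed[of \<sigma> n] by simp

lemma pow_add_apply:
  assumes "\<sigma> \<in> embeddings F"
  shows "(\<sigma> [^]\<^bsub>Gal\<^esub> ((m::nat) + n)) x = (\<sigma> [^]\<^bsub>Gal\<^esub> m) ((\<sigma> [^]\<^bsub>Gal\<^esub> n) x)"
proof -
  have "\<sigma> [^]\<^bsub>Gal\<^esub> (m + n) = \<sigma> [^]\<^bsub>Gal\<^esub> m \<circ> \<sigma> [^]\<^bsub>Gal\<^esub> n"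
    using Gal.nat_pow_mult[of \<sigma> m n] assms by simp
  then show ?thesis by simp
qed

lemma pow_Suc_apply:
  "\<sigma> \<in> embeddings F \<Longrightarrow> (\<sigma> [^]\<^bsub>Gal\<^esub> Suc n) x = \<sigma> ((\<sigma> [^]\<^bsub>Gal\<^esub> n) x)"
  using pow_add_apply[of \<sigma> 1 n x] by simp

lemma pow_0_apply: "x \<in> F \<Longrightarrow> (\<sigma> [^]\<^bsub>Gal\<^esub> (0::nat)) x = x"
  by (simp add: id_F_def)

end

section \<open>The Galois group of a field of degree \<open>2 ^ d\<close> is a \<open>2\<close>-group\<close>

context complex_subfield
begin

context
  fixes K :: "complex set" and \<theta> :: complex and p :: nat
  assumes K: "Qvs.subspace K" "K \<subseteq> F" and \<theta>: "\<theta> \<in> F"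
    and power_span: "\<And>y. y \<in> F \<Longrightarrow> \<exists>k. (\<forall>i. k i \<in> K) \<and> y = (\<Sum>i<p. k i * \<theta> ^ i)"
    and power_indep: "\<And>k. (\<And>i. i < p \<Longrightarrow> k i \<in> K) \<Longrightarrow> (\<Sum>i<p. k i * \<theta> ^ i) = 0 \<Longrightarrow>
                        \<forall>i<p. k i = 0"
begin

lemma inj_on_power_basis_products:
  assumes "BK \<subseteq> K" and "0 \<notin> BK"
  shows "inj_on (\<lambda>(b, i). b * \<theta> ^ i) (BK \<times> {..<p})"
proof (rule inj_onI, clarify)
  fix b i b' j
  assume b: "b \<in> BK" "i < p" and b': "b' \<in> BK" "j < p" and eq: "b * \<theta> ^ i = b' * \<theta> ^ j"
  define k where "k l = (if l = i then b else 0) - (if l = j then b' else 0)" for l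
  have "b \<in> K" "b' \<in> K" using b b' assms(1) by auto
  then have "k l \<in> K" for l
    using Qvs.subspace_0[OF K(1)] Qvs.subspace_diff[OF K(1)] Qvs.subspace_neg[OF K(1)]
    by (simp add: k_def)
  moreover have "(\<Sum>l<p. k l * \<theta> ^ l) = 0"
    using b b' eq by (simp add: k_def left_diff_distrib sum_subtractf if_distrib[of "\<lambda>c. c * _"]
        sum.delta cong: if_cong)
  ultimately have "k i = 0"
    using power_indep b(2) by blast
  then have "i = j \<and> b = b'"
    using b(1) assms(2) by (auto simp: k_def split: if_splits)
  then show "b = b' \<and> i = j" by simp
qed

lemma independent_power_basis_products:
  assumes BK: "BK \<subseteq> K" "finite BK" "Qvs.independent BK"
  shows "Qvs.independent ((\<lambda>(b, i). b * \<theta> ^ i) ` (BK \<times> {..<p}))" (is "Qvs.independent (?h ` ?I)")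
proof (rule Qvs.independent_if_scalars_zero)
  show "finite (?h ` ?I)" using BK(2) by simp
next
  fix f x assume sum0: "(\<Sum>x\<in>?h ` ?I. of_rat (f x) * x) = 0" and "x \<in> ?h ` ?I"
  then obtain b i where x: "x = b * \<theta> ^ i" "b \<in> BK" "i < p" by auto
  have "0 \<notin> BK" using BK(3) Qvs.dependent_zero by blast
  define c where "c i = (\<Sum>b\<in>BK. of_rat (f (b * \<theta> ^ i)) * b)" for i
  have "(\<Sum>x\<in>?h ` ?I. of_rat (f x) * x) = (\<Sum>(b, i)\<in>?I. of_rat (f (b * \<theta> ^ i)) * (b * \<theta> ^ i))"
    by (subst sum.reindex[OF inj_on_power_basis_products[OF BK(1) \<open>0 \<notin> BK\<close>]])
      (simp add: case_prod_beta)
  also have "\<dots> = (\<Sum>i<p. c i * \<theta> ^ i)"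
    by (simp add: sum.cartesian_product[symmetric] sum.swap[of _ BK] c_def sum_distrib_right mult.assoc)
  finally have "(\<Sum>i<p. c i * \<theta> ^ i) = 0" using sum0 by simp
  moreover have "c i \<in> K" for i
    unfolding c_def using BK(1) K(1)
    by (intro Qvs.subspace_sum Qvs.subspace_scale) auto
  ultimately have "c i = 0"
    using power_indep x(3) by blast
  then show "f x = 0"
    using Qvs.independentD[OF BK(3,2) order_refl, of "\<lambda>b. f (b * \<theta> ^ i)" b] x by (simp add: c_def)
qed

lemma span_power_basis_products:
  assumes BK: "finite BK" "K \<subseteq> Qvs.span BK"
  shows "F \<subseteq> Qvs.span ((\<lambda>(b, i). b * \<theta> ^ i) ` (BK \<times> {..<p}))"
proof
  fix y assume "y \<in> F"
  then obtain k where k: "\<forall>i. k i \<in> K" "y = (\<Sum>i<p. k i * \<theta> ^ i)"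
    using power_span by blast
  have "\<forall>i. \<exists>u. k i = (\<Sum>b\<in>BK. of_rat (u b) * b)"
    using k(1) BK(2) unfolding Qvs.span_finite[OF BK(1)] by blast
  then obtain u where u: "\<And>i. k i = (\<Sum>b\<in>BK. of_rat (u i b) * b)" by metis
  have "y = (\<Sum>i<p. \<Sum>b\<in>BK. of_rat (u i b) * (b * \<theta> ^ i))"
    unfolding k(2) u by (simp add: sum_distrib_right mult.assoc)
  also have "\<dots> \<in> Qvs.span ((\<lambda>(b, i). b * \<theta> ^ i) ` (BK \<times> {..<p}))"
    by (intro Qvs.span_sum Qvs.span_scale Qvs.span_base) auto
  finally show "y \<in> Qvs.span ((\<lambda>(b, i). b * \<theta> ^ i) ` (BK \<times> {..<p}))" .
qed

lemma dim_eq_mult_dim: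
  assumes "Qvs.dim F \<noteq> 0"
  shows "Qvs.dim F = p * Qvs.dim K"
proof -
  obtain B where B: "B \<subseteq> F" "Qvs.independent B" "F \<subseteq> Qvs.span B" "card B = Qvs.dim F"
    by (rule Qvs.basis_exists)
  have "finite B" using B(4) assms card.infinite by metis
  obtain BK where BK: "BK \<subseteq> K" "Qvs.independent BK" "K \<subseteq> Qvs.span BK" "card BK = Qvs.dim K"
    by (rule Qvs.basis_exists)
  have "finite BK"
    using Qvs.independent_span_bound[OF \<open>finite B\<close> BK(2)] BK(1) K(2) B(3) by blast
  define C where "C = (\<lambda>(b, i). b * \<theta> ^ i) ` (BK \<times> {..<p})"
  have "0 \<notin> BK" using BK(2) Qvs.dependent_zero by blast
  have "C \<subseteq> F" using BK(1) K(2) \<theta> by (auto simp: C_def)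
  then have "Qvs.span C = Qvs.span F"
    using span_power_basis_products[OF \<open>finite BK\<close> BK(3)] unfolding C_def
    by (metis Qvs.span_mono Qvs.span_minimal Qvs.subspace_span subset_antisym)
  then have "Qvs.dim F = card C"
    using independent_power_basis_products[OF BK(1) \<open>finite BK\<close> BK(2)] unfolding C_def
    by (metis Qvs.dim_eq_card)
  also have "\<dots> = card (BK \<times> {..<p})"
    unfolding C_def by (rule card_image[OF inj_on_power_basis_products[OF BK(1) \<open>0 \<notin> BK\<close>]])
  finally show ?thesis by (simp add: BK(4) card_cartesian_product)
qed

end

end

lemma prime_power_if_prime_divisors_eq:
  fixes n q :: nat
  assumes "n > 0" and "\<And>p. prime p \<Longrightarrow> p dvd n \<Longrightarrow> p = q"
  shows "\<exists>k. n = q ^ k"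
  using assms
proof (induction n rule: less_induct)
  case (less n)
  show ?case
  proof (cases "n = 1")
    case False
    then obtain p where "prime p" "p dvd n" using prime_factor_nat by blast
    then obtain m where m: "n = q * m" using less.prems(2) by (auto elim: dvdE)
    moreover have "q > 1" using \<open>prime p\<close> \<open>p dvd n\<close> less.prems(2) prime_gt_1_nat by blast
    ultimately have "m < n" "m > 0" using less.prems(1) by auto
    then obtain k where "m = q ^ k" using less.IH less.prems(2) m by force
    then show ?thesis using m by (metis power_Suc)
  qed (auto intro: exI[of _ 0])
qed

lemma (in group) exists_nontrivial_pow_prime_eq_one:
  assumes "finite (carrier G)" and "prime p" and "p dvd order G"
  shows "\<exists>g\<in>carrier G. g \<noteq> \<one> \<and> g [^] p = \<one>"
proof -
  obtain H where H: "subgroup H G" "card H = p"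
    using sylow_thm[of p G 1 "order G div p"] assms is_group by auto
  have "\<not> H \<subseteq> {\<one>}"
    using H(2) prime_gt_1_nat[OF assms(2)] card_mono[of "{\<one>}" H] by auto
  then obtain g where g: "g \<in> H" "g \<noteq> \<one>" by blast
  interpret H: group "G\<lparr>carrier := H\<rparr>"
    by (rule subgroup_imp_group[OF H(1)])
  have "g [^]\<^bsub>G\<lparr>carrier := H\<rparr>\<^esub> order (G\<lparr>carrier := H\<rparr>) = \<one>"
    using H.pow_order_eq_1 g(1) by simp
  then have "g [^] p = \<one>"
    using H(2) nat_pow_consistent[of g p H] by (simp add: order_def)
  then show ?thesis
    using g subgroup.subset[OF H(1)] by blast
qed

context galois_subfield
begin

definition fixed_field :: "(complex \<Rightarrow> complex) \<Rightarrow> complex set" where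
  "fixed_field g = {x \<in> F. g x = x}"

lemma subspace_fixed_field:
  assumes g: "g \<in> embeddings F"
  shows "Qvs.subspace (fixed_field g)"
  unfolding fixed_field_def by (rule Qvs.subspaceI) (auto simp: emb_simps[OF g])

context
  fixes g :: "complex \<Rightarrow> complex" and p :: nat and \<theta> :: complex
  assumes g: "g \<in> embeddings F" and p: "prime p" and g_pow_p: "g [^]\<^bsub>Gal\<^esub> p = id_F"
    and \<theta>: "\<theta> \<in> F" and g_\<theta>: "g \<theta> \<noteq> \<theta>"
begin

abbreviation conjugate :: "nat \<Rightarrow> complex" where
  "conjugate j \<equiv> (g [^]\<^bsub>Gal\<^esub> j) \<theta>"

lemma conjugate_mem: "conjugate j \<in> F"
  using emb_mem[OF pow_embedding[OF g] \<theta>] .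

lemma conjugate_0: "conjugate 0 = \<theta>"
  using pow_0_apply[OF \<theta>] .

lemma pow_mult_p_apply: "x \<in> F \<Longrightarrow> (g [^]\<^bsub>Gal\<^esub> (p * t)) x = x"
  using Gal.nat_pow_pow[of g p t] g g_pow_p Gal.nat_pow_one[of t] by (simp add: id_F_def)

lemma conjugate_p: "conjugate p = \<theta>"
  using pow_mult_p_apply[OF \<theta>, of 1] by simp

lemma pow_fixed_field: "x \<in> fixed_field g \<Longrightarrow> (g [^]\<^bsub>Gal\<^esub> (j::nat)) x = x"
  by (induction j) (auto simp: fixed_field_def id_F_def pow_Suc_apply[OF g])

text \<open>If two of \<open>\<theta>, g \<theta>, \<dots>, g\<^sup>p\<^sup>-\<^sup>1 \<theta>\<close> coincided, some \<open>g\<^sup>m\<close> with \<open>0 < m < p\<close> would fix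
  \<open>\<theta>\<close>; as \<open>m\<close> is invertible modulo \<open>p\<close>, so would \<open>g\<close>.\<close>

lemma inj_on_conjugate: "inj_on conjugate {..<p}"
proof (rule ccontr)
  assume "\<not> inj_on conjugate {..<p}"
  then obtain a b where "a < p" "b < p" "a \<noteq> b" "conjugate a = conjugate b"
    unfolding inj_on_def by auto
  then obtain i j where ij: "i < j" "j < p" "conjugate i = conjugate j"
    by (metis linorder_neqE_nat)
  define m where "m = j - i"
  have "m > 0" "m < p" using ij by (auto simp: m_def)
  have "(g [^]\<^bsub>Gal\<^esub> i) (conjugate m) = (g [^]\<^bsub>Gal\<^esub> i) \<theta>"
    using ij pow_add_apply[OF g, of i m \<theta>] by (simp add: m_def)
  then have fix_m: "conjugate m = \<theta>"
    using inj_onD[OF inj_on_emb[OF pow_embedding[OF g]]] conjugate_mem \<theta> by blast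
  have fix_mult: "conjugate (m * t) = \<theta>" for t
  proof (induction t)
    case (Suc t)
    then show ?case
      using pow_add_apply[OF g, of m "m * t" \<theta>] fix_m by (simp add: add.commute)
  qed (simp add: id_F_def \<theta>)
  have "\<not> p dvd m"
    using \<open>m > 0\<close> \<open>m < p\<close> by (auto dest: dvd_imp_le)
  then have "coprime m p"
    using prime_imp_coprime[OF p] by (simp add: coprime_commute)
  then obtain k t where "m * k = p * t + 1"
    using bezout_nat[of m p] \<open>m > 0\<close> by auto
  then have "\<theta> = (g [^]\<^bsub>Gal\<^esub> (1 + p * t)) \<theta>"
    using fix_mult[of k] by simp
  also have "\<dots> = g \<theta>"
    using pow_add_apply[OF g, of 1 "p * t" \<theta>] pow_mult_p_apply[OF \<theta>] g by simp
  finally show False using g_\<theta> by simp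
qed

lemma card_conjugates: "card (conjugate ` {..<p}) = p"
  using inj_on_conjugate by (simp add: card_image)

lemma map_poly_eq_if_interpolates_orbit:
  assumes y: "y \<in> F" and P: "poly_over P" "degree P < p"
    and P_conj: "\<And>j. j \<le> p \<Longrightarrow> poly P (conjugate j) = (g [^]\<^bsub>Gal\<^esub> j) y"
  shows "map_poly g P = P"
proof (rule poly_eqI_degree[of "conjugate ` {..<p}"])
  fix x assume "x \<in> conjugate ` {..<p}"
  then obtain j where j: "j < p" "x = conjugate j" by auto
  define i where "i = (if j = 0 then p - 1 else j - 1)"
  have "i < p" and "Suc i = (if j = 0 then p else j)"
    using j prime_ge_2_nat[OF p] by (auto simp: i_def)
  then have i: "i < p" "x = conjugate (Suc i)"
    using j conjugate_p conjugate_0 by auto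
  have "poly (map_poly g P) x = poly (map_poly g P) (g (conjugate i))"
    using i(2) pow_Suc_apply[OF g] by simp
  also have "\<dots> = g (poly P (conjugate i))"
    by (rule emb_poly[OF g P(1) conjugate_mem, symmetric])
  also have "\<dots> = g ((g [^]\<^bsub>Gal\<^esub> i) y)"
    using P_conj i(1) by simp
  also have "\<dots> = poly P x"
    using P_conj[of "Suc i"] i pow_Suc_apply[OF g, of i y] by (metis Suc_leI)
  finally show "poly (map_poly g P) x = poly P x" .
qed (use P(2) map_poly_degree_leq[of g P] in \<open>auto simp: card_conjugates\<close>)

text \<open>The interpolating polynomial of \<open>g\<^sup>j \<theta> \<mapsto> g\<^sup>j y\<close> is \<open>g\<close>-invariant, so its
  coefficients lie in the fixed field.\<close>

lemma fixed_field_span: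
  assumes y: "y \<in> F"
  shows "\<exists>k. (\<forall>i. k i \<in> fixed_field g) \<and> y = (\<Sum>i<p. k i * \<theta> ^ i)"
proof -
  have "p \<ge> 2" using p prime_ge_2_nat by blast
  have "inj_on conjugate {..p - 1}"
    using inj_on_conjugate by (rule inj_on_subset) (use \<open>p \<ge> 2\<close> in auto)
  moreover have "conjugate j \<in> F \<and> (g [^]\<^bsub>Gal\<^esub> j) y \<in> F" for j
    using conjugate_mem emb_mem[OF pow_embedding[OF g] y] by blast
  ultimately obtain P where P: "poly_over P" "degree P \<le> p - 1"
    "\<forall>j\<le>p - 1. poly P (conjugate j) = (g [^]\<^bsub>Gal\<^esub> j) y"
    using poly_interpolation[of "p - 1" conjugate "\<lambda>j. (g [^]\<^bsub>Gal\<^esub> j) y"] by blast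
  have P0: "poly P \<theta> = y"
    using P(3) conjugate_0 pow_0_apply[OF y] by (metis le0)
  have "poly P (conjugate j) = (g [^]\<^bsub>Gal\<^esub> j) y" if "j \<le> p" for j
  proof (cases "j = p")
    case True
    then show ?thesis using P0 conjugate_p pow_mult_p_apply[OF y, of 1] by simp
  qed (use P(3) that in auto)
  then have "map_poly g P = P"
    using map_poly_eq_if_interpolates_orbit[OF y P(1)] P(2) \<open>p \<ge> 2\<close> by simp
  then have "g (poly.coeff P i) = poly.coeff P i" for i
    using coeff_map_poly[of g P i] emb_0[OF g] by simp
  then have "poly.coeff P i \<in> fixed_field g" for i
    using P(1) by (simp add: fixed_field_def poly_over_def)
  moreover have "y = (\<Sum>i<p. poly.coeff P i * \<theta> ^ i)"
  proof -
    have "y = (\<Sum>i\<le>p - 1. poly.coeff P i * \<theta> ^ i)"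
      using poly_altdef_le[OF P(2)] P0 by simp
    also have "{..p - 1} = {..<p}"
      using \<open>p \<ge> 2\<close> by auto
    finally show ?thesis .
  qed
  ultimately show ?thesis by blast
qed

lemma fixed_field_independent:
  assumes k: "\<And>i. i < p \<Longrightarrow> k i \<in> fixed_field g" and sum0: "(\<Sum>i<p. k i * \<theta> ^ i) = 0"
  shows "\<forall>i<p. k i = 0"
proof -
  have kF: "k i \<in> F" if "i < p" for i using k[OF that] by (simp add: fixed_field_def)
  define P where "P = (\<Sum>i<p. Polynomial.monom (k i) i)"
  have coeff_P: "poly.coeff P j = (if j < p then k j else 0)" for j
    unfolding P_def by (simp add: coeff_sum)
  have "P = 0"
  proof (rule poly_eqI_degree[of "conjugate ` {..<p}"])
    fix x assume "x \<in> conjugate ` {..<p}"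
    then obtain j where x: "x = conjugate j" by auto
    have "poly P x = (\<Sum>i<p. k i * conjugate j ^ i)"
      unfolding P_def x by (simp add: poly_sum Polynomial.poly_monom)
    also have "\<dots> = (\<Sum>i<p. (g [^]\<^bsub>Gal\<^esub> j) (k i * \<theta> ^ i))"
      by (rule sum.cong) (use kF \<theta> pow_fixed_field[OF k] in \<open>simp_all add: emb_simps[OF pow_embedding[OF g]]\<close>)
    also have "\<dots> = (g [^]\<^bsub>Gal\<^esub> j) (\<Sum>i<p. k i * \<theta> ^ i)"
      by (rule emb_sum[OF pow_embedding[OF g], symmetric]) (use kF \<theta> in auto)
    also have "\<dots> = 0"
      using sum0 emb_0[OF pow_embedding[OF g]] by simp
    finally show "poly P x = poly 0 x" by simp
  next
    have "degree P \<le> p - 1" by (rule degree_le) (auto simp: coeff_P)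
    then show "degree P < card (conjugate ` {..<p})"
      using prime_gt_0_nat[OF p] by (simp add: card_conjugates)
  qed (use p prime_gt_0_nat in \<open>auto simp: card_conjugates\<close>)
  then show ?thesis using coeff_P by (metis coeff_0)
qed

end

lemma prime_dvd_degree:
  assumes g: "g \<in> embeddings F" "g \<noteq> id_F" and p: "prime p" "g [^]\<^bsub>Gal\<^esub> p = id_F"
    and "Qvs.dim F \<noteq> 0"
  shows "p dvd Qvs.dim F"
proof -
  obtain \<theta> where \<theta>: "\<theta> \<in> F" "g \<theta> \<noteq> \<theta>"
    using emb_eqI[OF g(1) id_F_embedding] g(2) by (auto simp: id_F_def)
  have "Qvs.dim F = p * Qvs.dim (fixed_field g)"
    using subspace_fixed_field[OF g(1)] \<theta>(1) fixed_field_span[OF g(1) p \<theta>]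
      fixed_field_independent[OF g(1) p \<theta>] \<open>Qvs.dim F \<noteq> 0\<close>
    by (intro dim_eq_mult_dim) (auto simp: fixed_field_def)
  then show ?thesis by simp
qed

lemma card_embeddings_power_of_two:
  assumes "finite (embeddings F)" and "Qvs.dim F = 2 ^ d"
  shows "\<exists>k. card (embeddings F) = 2 ^ k"
proof (rule prime_power_if_prime_divisors_eq)
  show "card (embeddings F) > 0"
    using assms(1) id_F_embedding card_gt_0_iff by blast
  fix p :: nat assume p: "prime p" "p dvd card (embeddings F)"
  then obtain g where g: "g \<in> embeddings F" "g \<noteq> id_F" "g [^]\<^bsub>Gal\<^esub> p = id_F"
    using Gal.exists_nontrivial_pow_prime_eq_one assms(1) by (auto simp: order_def)
  have "p dvd 2 ^ d"
    using prime_dvd_degree[OF g(1,2) p(1) g(3)] assms(2) by simp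
  then have "p dvd 2"
    using prime_dvd_power[OF p(1)] by blast
  then show "p = 2"
    using primes_dvd_imp_eq[OF p(1) two_is_prime_nat] by blast
qed

end

section \<open>Sign patterns over a finite \<open>2\<close>-group\<close>

lemma (in group_action) orbit_eq_singleton_iff:
  assumes "x \<in> E"
  shows "orbit G \<phi> x = {x} \<longleftrightarrow> (\<forall>g\<in>carrier G. \<phi> g x = x)"
proof
  assume orb: "orbit G \<phi> x = {x}"
  have "\<phi> g x \<in> orbit G \<phi> x" if "g \<in> carrier G" for g
    using that by (auto simp: orbit_def)
  then show "\<forall>g\<in>carrier G. \<phi> g x = x" using orb by simp
qed (use orbit_refl[OF assms] in \<open>auto simp: orbit_def\<close>)

lemma (in group_action) card_orbit_eq_1_or_prime_dvd:
  assumes "x \<in> E" and p: "prime p" and "order G = p ^ k"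
  shows "card (orbit G \<phi> x) = 1 \<or> p dvd card (orbit G \<phi> x)"
proof -
  have "card (orbit G \<phi> x) dvd p ^ k"
    using orbit_stabilizer_theorem[OF assms(1)] assms(3) by (metis dvd_triv_left)
  then obtain i where "card (orbit G \<phi> x) = p ^ i"
    using divides_primepow_nat[OF p] by blast
  then show ?thesis by (cases i) auto
qed

lemma (in group_action) card_fixed_points_mod_prime:
  assumes "finite E" and "prime p" and "order G = p ^ k"
  shows "card {x \<in> E. \<forall>g\<in>carrier G. \<phi> g x = x} mod p = card E mod p"
proof -
  define Fix where "Fix = {x \<in> E. \<forall>g\<in>carrier G. \<phi> g x = x}"
  define O1 where "O1 = {orb \<in> orbits G E \<phi>. card orb = 1}"
  have card_orbit: "card (orbit G \<phi> x) = 1 \<longleftrightarrow> x \<in> Fix" if "x \<in> E" for x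
    using orbit_refl[OF that] orbit_eq_singleton_iff[OF that] that
    by (auto simp: card_1_singleton_iff Fix_def)
  have "p dvd (\<Sum>orb \<in> orbits G E \<phi> - O1. card orb)"
    using card_orbit_eq_1_or_prime_dvd[OF _ assms(2,3)] by (intro dvd_sum) (auto simp: O1_def orbits_def)
  moreover have "O1 = (\<lambda>x. {x}) ` Fix"
  proof (intro equalityI subsetI)
    fix orb assume "orb \<in> O1"
    then obtain x where "x \<in> E" "orb = orbit G \<phi> x" "card orb = 1"
      by (auto simp: O1_def orbits_def)
    then have "x \<in> Fix" "orb = {x}"
      using card_orbit orbit_eq_singleton_iff[of x] by (auto simp: Fix_def)
    then show "orb \<in> (\<lambda>x. {x}) ` Fix" by blast
  next
    fix orb assume "orb \<in> (\<lambda>x. {x}) ` Fix"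
    then obtain x where "x \<in> E" "x \<in> Fix" "orb = {x}" by (auto simp: Fix_def)
    then show "orb \<in> O1"
      using orbit_eq_singleton_iff[of x] unfolding O1_def orbits_def Fix_def by auto
  qed
  then have "(\<Sum>orb \<in> O1. card orb) = card Fix"
    by (simp add: sum.reindex inj_on_def)
  moreover have "card E = (\<Sum>orb \<in> orbits G E \<phi> - O1. card orb) + (\<Sum>orb \<in> O1. card orb)"
  proof -
    have "card E = (\<Sum>orb \<in> orbits G E \<phi>. card orb)"
      using disjoint_sum[OF assms(1), of "\<lambda>_. 1::nat"] by simp
    then show ?thesis
      using assms(1) sum.subset_diff[of O1 "orbits G E \<phi>" card] by (auto simp: O1_def orbits_def)
  qed
  ultimately show ?thesis
    by (simp add: Fix_def mod_add_left_eq[symmetric])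
qed

lemma prod_sign_cases:
  "(\<And>i. i \<in> A \<Longrightarrow> f i = 1 \<or> f i = (-1::real)) \<Longrightarrow> prod f A = 1 \<or> prod f A = -1"
  by (induction A rule: infinite_finite_induct) force+

text \<open>In the application, \<open>w \<sigma>\<close> is the sign of \<open>\<sigma> \<alpha>\<close>, and \<open>sign_pattern G w X \<tau>\<close> is the sign
  of \<open>\<tau>\<close> applied to \<open>\<Prod>\<sigma>\<in>X. \<sigma> \<alpha>\<close>.\<close>

definition sign_pattern :: "('a, 'b) monoid_scheme \<Rightarrow> ('a \<Rightarrow> real) \<Rightarrow> 'a set \<Rightarrow> 'a \<Rightarrow> real" where
  "sign_pattern G w X \<tau> = (\<Prod>\<sigma>\<in>X. w (\<tau> \<otimes>\<^bsub>G\<^esub> \<sigma>))"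

definition sign_kernel :: "('a, 'b) monoid_scheme \<Rightarrow> ('a \<Rightarrow> real) \<Rightarrow> 'a set set" where
  "sign_kernel G w = {Z. Z \<subseteq> carrier G \<and> (\<forall>\<tau>\<in>carrier G. sign_pattern G w Z \<tau> = 1)}"

context group
begin

lemma l_coset_image: "a <# H = (\<lambda>h. a \<otimes> h) ` H"
  by (auto simp: l_coset_def)

lemma surj_mult_const: "a \<in> carrier G \<Longrightarrow> (\<lambda>x. x \<otimes> a) ` carrier G = carrier G"
  by (auto simp: image_def) (metis inv_closed inv_solve_right m_closed)

context
  fixes w :: "'a \<Rightarrow> real" and k :: nat
  assumes finite_carrier: "finite (carrier G)" and order_G: "order G = 2 ^ k"
    and w_sign: "\<And>\<tau>. \<tau> \<in> carrier G \<Longrightarrow> w \<tau> = 1 \<or> w \<tau> = -1"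
    and prod_w: "(\<Prod>\<tau>\<in>carrier G. w \<tau>) = -1"
begin

lemma sign_pattern_sign:
  "X \<subseteq> carrier G \<Longrightarrow> \<tau> \<in> carrier G \<Longrightarrow> sign_pattern G w X \<tau> = 1 \<or> sign_pattern G w X \<tau> = -1"
  unfolding sign_pattern_def by (rule prod_sign_cases) (use w_sign in blast)

lemma sign_pattern_carrier: "\<tau> \<in> carrier G \<Longrightarrow> sign_pattern G w (carrier G) \<tau> = -1"
  using prod.reindex[OF inj_on_cmult[of \<tau>], of w] surj_const_mult[of \<tau>] prod_w
  by (simp add: sign_pattern_def comp_def)

lemma prod_w_mult_right: "\<sigma> \<in> carrier G \<Longrightarrow> (\<Prod>\<tau>\<in>carrier G. w (\<tau> \<otimes> \<sigma>)) = -1"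
  using prod.reindex[OF inj_on_multc[of \<sigma>], of w] surj_mult_const[of \<sigma>] prod_w
  by (simp add: comp_def)

lemma sign_pattern_sym_diff:
  assumes "X \<subseteq> carrier G" "Y \<subseteq> carrier G" "\<tau> \<in> carrier G"
  shows "sign_pattern G w ((X - Y) \<union> (Y - X)) \<tau> = sign_pattern G w X \<tau> * sign_pattern G w Y \<tau>"
proof -
  let ?f = "\<lambda>\<sigma>. w (\<tau> \<otimes> \<sigma>)"
  have fin: "finite X" "finite Y" using assms finite_carrier finite_subset by auto
  have "?f \<sigma> * ?f \<sigma> = 1" if "\<sigma> \<in> X" for \<sigma>
  proof -
    have "\<tau> \<otimes> \<sigma> \<in> carrier G" using assms that by blast
    then show ?thesis using w_sign by force
  qed
  then have sq: "prod ?f (X \<inter> Y) * prod ?f (X \<inter> Y) = 1"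
    unfolding prod.distrib[symmetric] by (intro prod.neutral) auto
  have "sign_pattern G w X \<tau> * sign_pattern G w Y \<tau>
      = (prod ?f (X - Y) * prod ?f (X \<inter> Y)) * (prod ?f (Y - X) * prod ?f (X \<inter> Y))"
    unfolding sign_pattern_def using fin prod.subset_diff[of "X \<inter> Y" X ?f] prod.subset_diff[of "X \<inter> Y" Y ?f]
    by (simp add: Diff_Int Int_commute)
  also have "\<dots> = prod ?f (X - Y) * prod ?f (Y - X)"
    using sq by (simp add: algebra_simps)
  also have "\<dots> = sign_pattern G w ((X - Y) \<union> (Y - X)) \<tau>"
    unfolding sign_pattern_def using fin by (intro prod.union_disjoint[symmetric]) auto
  finally show ?thesis ..
qed

lemma sign_pattern_l_coset:
  assumes "g \<in> carrier G" "Z \<subseteq> carrier G" "\<tau> \<in> carrier G"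
  shows "sign_pattern G w (g <# Z) \<tau> = sign_pattern G w Z (\<tau> \<otimes> g)"
  unfolding sign_pattern_def l_coset_image
  using inj_on_subset[OF inj_on_cmult[OF assms(1)] assms(2)] assms
  by (auto simp: prod.reindex m_assoc intro!: prod.cong)

lemma sym_diff_sign_kernel:
  "X \<in> sign_kernel G w \<Longrightarrow> Y \<in> sign_kernel G w \<Longrightarrow> (X - Y) \<union> (Y - X) \<in> sign_kernel G w"
  unfolding sign_kernel_def using sign_pattern_sym_diff by auto

lemma l_coset_sign_kernel: "g \<in> carrier G \<Longrightarrow> Z \<in> sign_kernel G w \<Longrightarrow> g <# Z \<in> sign_kernel G w"
  unfolding sign_kernel_def using sign_pattern_l_coset l_coset_subset_G by auto

lemma bij_betw_l_coset_sign_kernel: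
  assumes "g \<in> carrier G"
  shows "bij_betw (\<lambda>Z. g <# Z) (sign_kernel G w) (sign_kernel G w)"
proof (rule bij_betwI[where g = "\<lambda>Z. inv g <# Z"])
  have "Z \<subseteq> carrier G" if "Z \<in> sign_kernel G w" for Z
    using that by (simp add: sign_kernel_def)
  then show "inv g <# (g <# Z) = Z" "g <# (inv g <# Z) = Z" if "Z \<in> sign_kernel G w" for Z
    using that assms by (simp_all add: lcos_m_assoc lcos_mult_one)
qed (use assms l_coset_sign_kernel in auto)

lemma group_action_sign_kernel:
  "group_action G (sign_kernel G w) (\<lambda>g. \<lambda>Z\<in>sign_kernel G w. g <# Z)"
  (is "group_action G ?N ?\<phi>")
  unfolding group_action_def group_hom_def group_hom_axioms_def
proof (intro conjI is_group group_BijGroup homI)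
  have Bij: "?\<phi> g \<in> Bij ?N" if "g \<in> carrier G" for g
    using bij_betw_l_coset_sign_kernel[OF that] by (simp add: Bij_def)
  then show "?\<phi> g \<in> carrier (BijGroup ?N)" if "g \<in> carrier G" for g
    using that by (simp add: BijGroup_def)
  fix g h assume g: "g \<in> carrier G" and h: "h \<in> carrier G"
  have "?\<phi> g \<otimes>\<^bsub>BijGroup ?N\<^esub> ?\<phi> h = compose ?N (?\<phi> g) (?\<phi> h)"
    using Bij[OF g] Bij[OF h] by (simp add: BijGroup_def)
  also have "\<dots> = ?\<phi> (g \<otimes> h)"
  proof
    fix Z
    show "compose ?N (?\<phi> g) (?\<phi> h) Z = ?\<phi> (g \<otimes> h) Z"
      using l_coset_sign_kernel[OF h] g h
      by (cases "Z \<in> ?N") (auto simp: compose_def lcos_m_assoc sign_kernel_def)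
  qed
  finally show "?\<phi> (g \<otimes> h) = ?\<phi> g \<otimes>\<^bsub>BijGroup ?N\<^esub> ?\<phi> h" ..
qed

text \<open>Symmetric difference with a nonempty \<open>Z\<close> swaps the members of the kernel containing some
  fixed \<open>a \<in> Z\<close> with those that do not.\<close>

lemma even_card_sign_kernel:
  assumes "Z \<in> sign_kernel G w" and "Z \<noteq> {}"
  shows "even (card (sign_kernel G w))"
proof -
  obtain a where "a \<in> Z" using assms(2) by blast
  define A where "A = {X \<in> sign_kernel G w. a \<notin> X}"
  define B where "B = {X \<in> sign_kernel G w. a \<in> X}"
  have "bij_betw (\<lambda>X. (X - Z) \<union> (Z - X)) A B"
    by (rule bij_betwI[where g = "\<lambda>X. (X - Z) \<union> (Z - X)"])
      (use sym_diff_sign_kernel assms(1) \<open>a \<in> Z\<close> in \<open>auto simp: A_def B_def\<close>)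
  then have "card A = card B" by (rule bij_betw_same_card)
  moreover have "finite (sign_kernel G w)"
    using finite_carrier by (auto simp: sign_kernel_def)
  then have "card (sign_kernel G w) = card A + card B"
    unfolding A_def B_def by (subst card_Un_disjoint[symmetric]) (auto intro: arg_cong[where f = card])
  ultimately show ?thesis by simp
qed

text \<open>A nonempty element of the kernel would give, by counting fixed points of the translation
  action of the \<open>2\<close>-group \<open>G\<close>, a nonempty translation-invariant element, i.e.\ \<open>carrier G\<close> itself;
  but the pattern of \<open>carrier G\<close> is \<open>-1\<close>.\<close>

lemma sign_kernel_trivial:
  assumes "Z \<in> sign_kernel G w"
  shows "Z = {}"
proof (rule ccontr)
  assume "Z \<noteq> {}"
  interpret act: group_action G "sign_kernel G w" "\<lambda>g. \<lambda>Z\<in>sign_kernel G w. g <# Z"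
    by (rule group_action_sign_kernel)
  define Fix where "Fix = {X \<in> sign_kernel G w. \<forall>g\<in>carrier G. g <# X = X}"
  have "Fix = {X \<in> sign_kernel G w. \<forall>g\<in>carrier G. (\<lambda>Z\<in>sign_kernel G w. g <# Z) X = X}"
    by (auto simp: Fix_def)
  moreover have "finite (sign_kernel G w)"
    using finite_carrier by (auto simp: sign_kernel_def)
  ultimately have "card Fix mod 2 = card (sign_kernel G w) mod 2"
    using act.card_fixed_points_mod_prime[OF _ two_is_prime_nat order_G] by simp
  then have "even (card Fix)"
    using even_card_sign_kernel[OF assms \<open>Z \<noteq> {}\<close>] by (simp add: even_iff_mod_2_eq_zero)
  moreover have "{} \<in> Fix"
    by (auto simp: Fix_def sign_kernel_def sign_pattern_def l_coset_def)
  moreover have "Fix \<noteq> {{}}"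
    using \<open>even (card Fix)\<close> by auto
  ultimately obtain Z' where Z': "Z' \<in> Fix" "Z' \<noteq> {}"
    by blast
  then obtain a where a: "a \<in> Z'" by blast
  have Z'_carrier: "Z' \<subseteq> carrier G" and Z'_N: "Z' \<in> sign_kernel G w"
    using Z'(1) by (auto simp: Fix_def sign_kernel_def)
  have "carrier G \<subseteq> Z'"
  proof
    fix \<tau> assume \<tau>: "\<tau> \<in> carrier G"
    have "\<tau> \<otimes> inv a \<in> carrier G" using \<tau> a Z'_carrier by blast
    then have "(\<tau> \<otimes> inv a) <# Z' = Z'" using Z'(1) Z'_N by (auto simp: Fix_def)
    moreover have "\<tau> = (\<tau> \<otimes> inv a) \<otimes> a" using \<tau> a Z'_carrier by (auto simp: m_assoc)
    ultimately show "\<tau> \<in> Z'" using a by (auto simp: l_coset_def)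
  qed
  then have "sign_pattern G w (carrier G) \<one> = 1"
    using Z'_N Z'_carrier by (auto simp: sign_kernel_def)
  then show False using sign_pattern_carrier[OF one_closed] by simp
qed

lemma inj_on_sign_pattern: "inj_on (\<lambda>X. restrict (sign_pattern G w X) (carrier G)) (Pow (carrier G))"
proof (rule inj_onI)
  fix X Y assume X: "X \<in> Pow (carrier G)" and Y: "Y \<in> Pow (carrier G)"
    and eq: "restrict (sign_pattern G w X) (carrier G) = restrict (sign_pattern G w Y) (carrier G)"
  have "sign_pattern G w ((X - Y) \<union> (Y - X)) \<tau> = 1" if "\<tau> \<in> carrier G" for \<tau>
    using sign_pattern_sym_diff[of X Y \<tau>] sign_pattern_sign[of X \<tau>] X Y that
      fun_cong[OF eq, of \<tau>] by auto
  then have "(X - Y) \<union> (Y - X) \<in> sign_kernel G w"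
    using X Y by (auto simp: sign_kernel_def)
  then show "X = Y" using sign_kernel_trivial by blast
qed

lemma prod_sign_pattern:
  assumes "X \<subseteq> carrier G"
  shows "(\<Prod>\<tau>\<in>carrier G. sign_pattern G w X \<tau>) = (-1) ^ card X"
proof -
  have "(\<Prod>\<tau>\<in>carrier G. sign_pattern G w X \<tau>) = (\<Prod>\<sigma>\<in>X. \<Prod>\<tau>\<in>carrier G. w (\<tau> \<otimes> \<sigma>))"
    unfolding sign_pattern_def by (rule prod.swap)
  also have "\<dots> = (\<Prod>\<sigma>\<in>X. -1)"
    using assms prod_w_mult_right by (intro prod.cong) auto
  finally show ?thesis by simp
qed

lemma sign_pattern_surj:
  assumes s: "\<And>\<tau>. \<tau> \<in> carrier G \<Longrightarrow> s \<tau> = 1 \<or> s \<tau> = -1" and prod_s: "(\<Prod>\<tau>\<in>carrier G. s \<tau>) = 1"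
  shows "\<exists>X\<subseteq>carrier G. even (card X) \<and> (\<forall>\<tau>\<in>carrier G. sign_pattern G w X \<tau> = s \<tau>)"
proof -
  define S :: "('a \<Rightarrow> real) set" where
    "S = {f \<in> extensional (carrier G). \<forall>\<tau>\<in>carrier G. f \<tau> = 1 \<or> f \<tau> = -1}"
  define pat where "pat X = restrict (sign_pattern G w X) (carrier G)" for X
  have "bij_betw (\<lambda>M. \<lambda>\<tau>\<in>carrier G. if \<tau> \<in> M then -1 else (1::real)) (Pow (carrier G)) S"
    by (rule bij_betwI[where g = "\<lambda>f. {\<tau> \<in> carrier G. f \<tau> = -1}"])
      (auto simp: S_def fun_eq_iff extensional_def)
  then have "finite S" "card S = card (Pow (carrier G))"
    using finite_carrier bij_betw_finite bij_betw_same_card by (metis finite_Pow_iff)+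
  moreover have "pat ` Pow (carrier G) \<subseteq> S"
    using sign_pattern_sign by (fastforce simp: S_def pat_def)
  ultimately have "pat ` Pow (carrier G) = S"
    using inj_on_sign_pattern by (intro card_subset_eq) (simp_all add: card_image pat_def)
  moreover have "restrict s (carrier G) \<in> S"
    using s by (auto simp: S_def)
  ultimately obtain X where X: "X \<subseteq> carrier G" "pat X = restrict s (carrier G)"
    by (auto simp: image_iff)
  then have pattern: "\<forall>\<tau>\<in>carrier G. sign_pattern G w X \<tau> = s \<tau>"
    unfolding pat_def by (metis restrict_apply')
  then have "(-1::real) ^ card X = 1"
    using prod_sign_pattern[OF X(1)] prod_s by simp
  then have "even (card X)"
    by (simp add: minus_one_power_iff split: if_splits)
  then show ?thesis
    using X(1) pattern by blast
qed

end

end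

section \<open>Units with prescribed signs\<close>

lemma sgn_prod_real: "sgn (prod f A) = (\<Prod>i\<in>A. sgn (f i :: real))"
  by (induction A rule: infinite_finite_induct) (auto simp: sgn_mult)

lemma Re_prod_real:
  assumes "\<And>i. i \<in> A \<Longrightarrow> f i \<in> \<real>"
  shows "Re (prod f A) = (\<Prod>i\<in>A. Re (f i))"
proof -
  have "prod f A = (\<Prod>i\<in>A. complex_of_real (Re (f i)))"
    using assms by (intro prod.cong) (auto elim: Reals_cases)
  then show ?thesis
    by (simp flip: of_real_prod)
qed

context complex_subfield
begin

lemma ring_of_integers_mult:
  "x \<in> ring_of_integers F \<Longrightarrow> y \<in> ring_of_integers F \<Longrightarrow> x * y \<in> ring_of_integers F"
  by (simp add: ring_of_integers_def algebraic_int_mult)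

lemma one_in_ring_of_integers: "1 \<in> ring_of_integers F"
  by (simp add: ring_of_integers_def)

lemma units_of_integers_mult:
  assumes "u \<in> units_of_integers F" and "v \<in> units_of_integers F"
  shows "u * v \<in> units_of_integers F"
proof -
  obtain u' v' where "u' \<in> ring_of_integers F" "u * u' = 1" "v' \<in> ring_of_integers F" "v * v' = 1"
    using assms by (auto simp: units_of_integers_def)
  moreover have "(u * v) * (u' * v') = (u * u') * (v * v')"
    by (simp only: ac_simps)
  ultimately show ?thesis
    using assms by (auto simp: units_of_integers_def intro!: ring_of_integers_mult bexI[of _ "u' * v'"])
qed

lemma units_of_integers_prod:
  "(\<And>i. i \<in> A \<Longrightarrow> f i \<in> units_of_integers F) \<Longrightarrow> prod f A \<in> units_of_integers F"
proof (induction A rule: infinite_finite_induct)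
  case (insert x A)
  then show ?case by (simp add: units_of_integers_mult)
qed (use one_in_ring_of_integers in \<open>auto simp: units_of_integers_def\<close>)

end

context galois_subfield
begin

lemma emb_ring_of_integers:
  "\<sigma> \<in> embeddings F \<Longrightarrow> x \<in> ring_of_integers F \<Longrightarrow> \<sigma> x \<in> ring_of_integers F"
  by (auto simp: ring_of_integers_def emb_mem intro: emb_algebraic_int)

text \<open>If the ideal \<open>(\<alpha>)\<close> is Galois-stable then \<open>\<sigma> \<alpha> = \<alpha> x\<close> and \<open>\<alpha> = \<sigma> (\<alpha> y)\<close> with \<open>x, y\<close>
  integral, whence \<open>x \<cdot> \<sigma> y = 1\<close>.\<close>

lemma emb_quotient_unit:
  assumes \<alpha>: "\<alpha> \<in> F" "\<alpha> \<noteq> 0" and \<sigma>: "\<sigma> \<in> embeddings F"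
    and stable: "\<sigma> ` principal_ideal F \<alpha> = principal_ideal F \<alpha>"
  shows "\<sigma> \<alpha> / \<alpha> \<in> units_of_integers F"
proof -
  have "\<alpha> \<in> principal_ideal F \<alpha>"
    unfolding principal_ideal_def using one_in_ring_of_integers by (intro CollectI exI[of _ 1]) simp
  then have "\<sigma> \<alpha> \<in> principal_ideal F \<alpha>" and "\<alpha> \<in> \<sigma> ` principal_ideal F \<alpha>"
    using imageI[of \<alpha> "principal_ideal F \<alpha>" \<sigma>] by (simp_all add: stable)
  then obtain x z where x: "x \<in> ring_of_integers F" "\<sigma> \<alpha> = \<alpha> * x"
    and z: "z \<in> principal_ideal F \<alpha>" "\<alpha> = \<sigma> z"
    unfolding principal_ideal_def by blast
  then obtain y where y: "y \<in> ring_of_integers F" "z = \<alpha> * y"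
    unfolding principal_ideal_def by blast
  have "y \<in> F" using y(1) by (simp add: ring_of_integers_def)
  then have "\<alpha> * (x * \<sigma> y) = \<alpha> * 1"
    using x(2) z(2) y(2) emb_mult[OF \<sigma> \<alpha>(1)] by (metis mult.assoc mult_1_right)
  then have "x * \<sigma> y = 1"
    using \<alpha>(2) by simp
  moreover have "\<sigma> \<alpha> / \<alpha> = x"
    using x(2) \<alpha>(2) by simp
  ultimately show ?thesis
    using x(1) emb_ring_of_integers[OF \<sigma> y(1)] by (auto simp: units_of_integers_def)
qed

context
  assumes real: "totally_real F"
begin

lemma emb_real: "\<sigma> \<in> embeddings F \<Longrightarrow> x \<in> F \<Longrightarrow> \<sigma> x \<in> \<real>"
  using real by (auto simp: totally_real_def)

lemma sgn_field_norm:
  assumes "finite (embeddings F)" "\<alpha> \<in> F"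
  shows "sgn (Re (field_norm F \<alpha>)) = (\<Prod>\<sigma>\<in>embeddings F. sgn (Re (\<sigma> \<alpha>)))"
  unfolding field_norm_def using emb_real assms(2) by (simp add: Re_prod_real sgn_prod_real)

lemma emb_sign:
  assumes "\<alpha> \<in> F" "\<alpha> \<noteq> 0" "\<sigma> \<in> embeddings F"
  shows "sgn (Re (\<sigma> \<alpha>)) = 1 \<or> sgn (Re (\<sigma> \<alpha>)) = -1"
  using emb_real[OF assms(3,1)] emb_nonzero[OF assms(3,1,2)] by (auto simp: sgn_if elim!: Reals_cases)

lemma sgn_emb_prod_quotients:
  assumes \<alpha>: "\<alpha> \<in> F" "\<alpha> \<noteq> 0" and X: "X \<subseteq> embeddings F" "even (card X)"
    and \<tau>: "\<tau> \<in> embeddings F"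
  shows "sgn (Re (\<tau> (\<Prod>\<sigma>\<in>X. \<sigma> \<alpha> / \<alpha>))) = sign_pattern Gal (\<lambda>\<sigma>. sgn (Re (\<sigma> \<alpha>))) X \<tau>"
proof -
  define w where "w = (\<lambda>\<sigma>. sgn (Re (\<sigma> \<alpha>)))"
  have w\<tau>: "w \<tau> = 1 \<or> w \<tau> = -1"
    unfolding w_def by (rule emb_sign[OF \<alpha> \<tau>])
  have \<sigma>\<alpha>: "\<sigma> \<alpha> \<in> F" if "\<sigma> \<in> X" for \<sigma>
    using that X(1) emb_mem[OF _ \<alpha>(1)] by blast
  have "\<tau> (\<Prod>\<sigma>\<in>X. \<sigma> \<alpha> / \<alpha>) = (\<Prod>\<sigma>\<in>X. \<tau> (\<sigma> \<alpha> / \<alpha>))"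
    using \<sigma>\<alpha> \<alpha>(1) by (intro emb_prod[OF \<tau>]) simp
  also have "\<dots> = (\<Prod>\<sigma>\<in>X. (\<tau> \<circ> \<sigma>) \<alpha> / \<tau> \<alpha>)"
    using \<sigma>\<alpha> \<alpha>(1) by (intro prod.cong) (simp_all add: emb_divide[OF \<tau>])
  finally have "\<tau> (\<Prod>\<sigma>\<in>X. \<sigma> \<alpha> / \<alpha>) = (\<Prod>\<sigma>\<in>X. (\<tau> \<circ> \<sigma>) \<alpha> / \<tau> \<alpha>)" .
  moreover have "(\<tau> \<circ> \<sigma>) \<alpha> / \<tau> \<alpha> \<in> \<real>" if "\<sigma> \<in> X" for \<sigma>
    using that X(1) emb_real[OF comp_embedding[OF \<tau>] \<alpha>(1)] emb_real[OF \<tau> \<alpha>(1)]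
    by (auto intro!: Reals_divide)
  ultimately have "sgn (Re (\<tau> (\<Prod>\<sigma>\<in>X. \<sigma> \<alpha> / \<alpha>))) = (\<Prod>\<sigma>\<in>X. sgn (Re ((\<tau> \<circ> \<sigma>) \<alpha> / \<tau> \<alpha>)))"
    by (simp add: Re_prod_real sgn_prod_real)
  also have "\<dots> = (\<Prod>\<sigma>\<in>X. w (\<tau> \<circ> \<sigma>) * w \<tau>)"
  proof (rule prod.cong)
    fix \<sigma> assume "\<sigma> \<in> X"
    have "Re ((\<tau> \<circ> \<sigma>) \<alpha> / \<tau> \<alpha>) = Re ((\<tau> \<circ> \<sigma>) \<alpha>) / Re (\<tau> \<alpha>)"
      using emb_real[OF \<tau> \<alpha>(1)] by (auto elim!: Reals_cases)
    then show "sgn (Re ((\<tau> \<circ> \<sigma>) \<alpha> / \<tau> \<alpha>)) = w (\<tau> \<circ> \<sigma>) * w \<tau>"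
      using w\<tau> by (auto simp: w_def sgn_divide)
  qed simp
  also have "\<dots> = sign_pattern Gal w X \<tau> * w \<tau> ^ card X"
    by (simp add: prod.distrib sign_pattern_def)
  also have "w \<tau> ^ card X = 1"
    using w\<tau> X(2) by auto
  finally show ?thesis by (simp add: w_def)
qed

end

end

theorem lemma3p15:
  fixes F :: "complex set" and d :: nat and \<alpha> :: complex
    and s :: "(complex \<Rightarrow> complex) \<Rightarrow> real"
  assumes "subfield_C F"
    and "degree_Q F = 2 ^ d"
    and "totally_real F"
    and "galois_Q F"
    and "\<alpha> \<in> F"
    and "Re (field_norm F \<alpha>) < 0"
    and "\<forall>\<sigma>\<in>embeddings F. \<sigma> ` principal_ideal F \<alpha> = principal_ideal F \<alpha>"
    and "\<forall>\<sigma>\<in>embeddings F. s \<sigma> = 1 \<or> s \<sigma> = -1"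
    and "(\<Prod>\<sigma>\<in>embeddings F. s \<sigma>) = 1"
  shows "\<exists>u\<in>units_of_integers F. \<forall>\<sigma>\<in>embeddings F. sgn (Re (\<sigma> u)) = s \<sigma>"
proof -
  interpret galois_subfield F
    using assms(1,4) by unfold_locales
  define w where "w = (\<lambda>\<sigma>. sgn (Re (\<sigma> \<alpha>)))"
  have finite: "finite (embeddings F)"
  proof (rule ccontr)
    assume "infinite (embeddings F)"
    \<comment> \<open>then \<open>field_norm F \<alpha>\<close>, a product over an infinite set, is \<open>1\<close>\<close>
    then show False using assms(6) by (simp add: field_norm_def)
  qed
  have "\<alpha> \<noteq> 0"
    using assms(6) finite id_F_embedding by (auto simp: field_norm_def emb_0 prod_zero)
  obtain k where k: "order Gal = 2 ^ k"
    using card_embeddings_power_of_two[OF finite] assms(2) by (auto simp: degree_Q_def order_def)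
  have prod_w: "(\<Prod>\<sigma>\<in>embeddings F. w \<sigma>) = -1"
    using sgn_field_norm[OF assms(3) finite assms(5)] assms(6) by (simp add: w_def)
  have "\<exists>X\<subseteq>embeddings F. even (card X) \<and> (\<forall>\<tau>\<in>embeddings F. sign_pattern Gal w X \<tau> = s \<tau>)"
    by (rule Gal.sign_pattern_surj[where w = w and k = k and s = s, unfolded Gal_simps])
      (use finite k prod_w emb_sign[OF assms(3,5) \<open>\<alpha> \<noteq> 0\<close>] assms(8,9) in \<open>auto simp: w_def\<close>)
  then obtain X where X: "X \<subseteq> embeddings F" "even (card X)"
    "\<forall>\<tau>\<in>embeddings F. sign_pattern Gal w X \<tau> = s \<tau>"
    by blast
  have "(\<Prod>\<sigma>\<in>X. \<sigma> \<alpha> / \<alpha>) \<in> units_of_integers F"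
    using X(1) assms(5,7) \<open>\<alpha> \<noteq> 0\<close> by (intro units_of_integers_prod emb_quotient_unit) auto
  moreover have "\<forall>\<tau>\<in>embeddings F. sgn (Re (\<tau> (\<Prod>\<sigma>\<in>X. \<sigma> \<alpha> / \<alpha>))) = s \<tau>"
    using sgn_emb_prod_quotients[OF assms(3,5) \<open>\<alpha> \<noteq> 0\<close> X(1,2)] X(3) by (simp add: w_def)
  ultimately show ?thesis by blast
qed

end
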